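(* Let $(k,|\cdot|)$ be a complete valued field and $\mu$ a probability measure with countable support on $\mathrm{SL}(2,k)$ with $\int\log\|\gamma\|\,d\mu(\gamma)<\infty$. Suppose that every element of the support of $\mu$, acting as a Möbius transformation, leaves the pair $\{0,\infty\}$ invariant, and at least one element of the support permutes $0$ and $\infty$. Then $\chi(\mu)=0$.
   Context: $\|\cdot\|$ is the operator norm on $\mathrm{SL}(2,k)$ for the max norm on $k^2$; $\chi(\mu)=\lim_n\frac1n\int\log\|\gamma\|\,d\mu^n(\gamma)$ with $\mu^n$ the $n$-th convolution power. Such elements are matrices $\mathrm{diag}(\alpha,\alpha^{-1})$ or $\begin{pmatrix}0&-\alpha\\\alpha^{-1}&0\end{pmatrix}$. *)

theory Defs
  imports "HOL-Probability.Probability"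
begin

definition absolute_value :: "('k::field \<Rightarrow> real) \<Rightarrow> bool" where
  "absolute_value av \<longleftrightarrow>
     (\<forall>x. av x \<ge> 0) \<and> (\<forall>x. av x = 0 \<longleftrightarrow> x = 0) \<and>
     (\<forall>x y. av (x * y) = av x * av y) \<and> (\<forall>x y. av (x + y) \<le> av x + av y)"

definition complete_valued_field :: "('k::field \<Rightarrow> real) \<Rightarrow> bool" where
  "complete_valued_field av \<longleftrightarrow> absolute_value av \<and>
     (\<forall>s :: nat \<Rightarrow> 'k. (\<forall>e>0. \<exists>N. \<forall>m\<ge>N. \<forall>n\<ge>N. av (s m - s n) < e) \<longrightarrow>
        (\<exists>l. (\<lambda>n. av (s n - l)) \<longlonglongrightarrow> 0))"

text \<open>A matrix (a,b,c,d) stands for [[a,b],[c,d]].\<close>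
type_synonym 'k mat2 = "'k \<times> 'k \<times> 'k \<times> 'k"

fun mmul :: "'k::field mat2 \<Rightarrow> 'k mat2 \<Rightarrow> 'k mat2" where
  "mmul (a, b, c, d) (a', b', c', d') =
     (a*a' + b*c', a*b' + b*d', c*a' + d*c', c*b' + d*d')"

definition mid :: "'k::field mat2" where "mid = (1, 0, 0, 1)"

fun mdet :: "'k::field mat2 \<Rightarrow> 'k" where
  "mdet (a, b, c, d) = a*d - b*c"

definition SL2 :: "'k::field mat2 set" where
  "SL2 = {g. mdet g = 1}"

fun mapply :: "'k::field mat2 \<Rightarrow> 'k \<times> 'k \<Rightarrow> 'k \<times> 'k" where
  "mapply (a, b, c, d) (x, y) = (a*x + b*y, c*x + d*y)"

fun vnorm :: "('k \<Rightarrow> real) \<Rightarrow> 'k \<times> 'k \<Rightarrow> real" where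
  "vnorm av (x, y) = max (av x) (av y)"

definition opnorm :: "('k::field \<Rightarrow> real) \<Rightarrow> 'k mat2 \<Rightarrow> real" where
  "opnorm av g = (SUP v \<in> {v. v \<noteq> (0, 0)}. vnorm av (mapply g v) / vnorm av v)"

datatype 'k proj = Fin 'k | Infty

fun mobius :: "'k::field mat2 \<Rightarrow> 'k proj \<Rightarrow> 'k proj" where
  "mobius (a, b, c, d) (Fin z) =
     (if c*z + d = 0 then Infty else Fin ((a*z + b) / (c*z + d)))"
| "mobius (a, b, c, d) Infty = (if c = 0 then Infty else Fin (a / c))"

definition conv :: "'k::field mat2 pmf \<Rightarrow> 'k mat2 pmf \<Rightarrow> 'k mat2 pmf" where
  "conv p q = bind_pmf p (\<lambda>x. map_pmf (\<lambda>y. mmul x y) q)"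

fun convpow :: "'k::field mat2 pmf \<Rightarrow> nat \<Rightarrow> 'k mat2 pmf" where
  "convpow p 0 = return_pmf mid"
| "convpow p (Suc n) = conv (convpow p n) p"

end

theory Submission
  imports Defs
begin

text \<open>
  A matrix of \<open>SL(2, k)\<close> leaving the pair \<open>{0, \<infinity>}\<close> invariant is monomial: \<open>diag(a, a\<^sup>-\<^sup>1)\<close> or
  \<open>antidiag(b, c)\<close> with \<open>b c = -1\<close>. For such \<open>\<gamma>\<close> write \<open>\<Psi>(\<gamma>) = log|a|\<close>, resp. \<open>log|c|\<close>, and
  \<open>\<sigma>(\<gamma>) = \<plusminus>1\<close> according to the shape; then \<open>log\<parallel>\<gamma>\<parallel> = |\<Psi>(\<gamma>)|\<close> and
  \<open>\<Psi>(\<gamma> g) = \<sigma>(g) \<Psi>(\<gamma>) + \<Psi>(g)\<close>. Hence \<open>log\<parallel>\<gamma>\<^sub>n\<parallel> = |X\<^sub>n|\<close> for the Markov chain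
  \<open>X\<^sub>n\<^sub>+\<^sub>1 = \<sigma>(g) X\<^sub>n + \<Psi>(g)\<close>, \<open>g\<close> drawn from \<open>\<mu>\<close>.

  Because some element of the support swaps \<open>0\<close> and \<open>\<infinity>\<close>, \<open>\<rho> = E \<sigma> < 1\<close>, and the signs
  decorrelate the increments: for increments bounded by \<open>M\<close> the mean obeys
  \<open>E X\<^sub>n\<^sub>+\<^sub>1 = \<rho> E X\<^sub>n + const\<close>, so it stays bounded, and then \<open>E X\<^sub>n\<^sup>2 = O(n M\<^sup>2 / (1 - \<rho>))\<close>.
  For integrable increments, truncating at level \<open>M\<close> gives
  \<open>E|X\<^sub>n| \<le> O(\<surd>n) + n E|\<Psi> - clip\<^sub>M \<Psi>|\<close>; the last expectation tends to \<open>0\<close> as \<open>M \<rightarrow> \<infinity>\<close>,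
  so \<open>E log\<parallel>\<gamma>\<^sub>n\<parallel> / n \<rightarrow> 0\<close>.
\<close>

lemma integrable_measure_pmf_bounded:
  fixes f :: "'a \<Rightarrow> real"
  assumes "\<And>x. x \<in> set_pmf p \<Longrightarrow> \<bar>f x\<bar> \<le> B"
  shows "integrable (measure_pmf p) f"
  by (rule measure_pmf.integrable_const_bound[where B=B])
     (use assms in \<open>auto simp: AE_measure_pmf_iff\<close>)

lemma abs_integral_measure_pmf_le:
  fixes f :: "'a \<Rightarrow> real"
  assumes "\<And>x. x \<in> set_pmf p \<Longrightarrow> \<bar>f x\<bar> \<le> B"
  shows "\<bar>\<integral>x. f x \<partial>p\<bar> \<le> B"
proof -
  have integrable: "integrable p f" using assms by (rule integrable_measure_pmf_bounded)
  have "- B \<le> f x \<and> f x \<le> B" if "x \<in> set_pmf p" for x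
    using assms[OF that] by arith
  then have "AE x in p. - B \<le> f x" "AE x in p. f x \<le> B"
    by (simp_all add: AE_measure_pmf_iff)
  then have "- B \<le> (\<integral>x. f x \<partial>p)" "(\<integral>x. f x \<partial>p) \<le> B"
    by (simp_all add: integrable measure_pmf.integral_ge_const measure_pmf.integral_le_const)
  then show ?thesis by simp
qed

lemma integral_bind_pmf_bounded:
  fixes f :: "'b \<Rightarrow> real"
  assumes bounded: "\<And>y. y \<in> set_pmf (bind_pmf p q) \<Longrightarrow> \<bar>f y\<bar> \<le> B"
  shows "(\<integral>y. f y \<partial>bind_pmf p q) = (\<integral>x. (\<integral>y. f y \<partial>q x) \<partial>p)"
proof -
  define f' where "f' y = (if y \<in> set_pmf (bind_pmf p q) then f y else 0)" for y
  obtain y0 where "y0 \<in> set_pmf (bind_pmf p q)"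
    using set_pmf_not_empty[of "bind_pmf p q"] by blast
  then have "0 \<le> B" using bounded abs_ge_zero order_trans by blast
  then have f'_bounded: "\<bar>f' y\<bar> \<le> B" for y
    using bounded[of y] unfolding f'_def by auto
  have "(\<integral>y. f y \<partial>bind_pmf p q) = (\<integral>y. f' y \<partial>bind_pmf p q)"
    by (intro integral_cong_AE) (auto simp: f'_def AE_measure_pmf_iff)
  also have "\<dots> = (\<integral>x. (\<integral>y. f' y \<partial>q x) \<partial>p)"
    unfolding measure_pmf_bind
    by (rule integral_bind[where K="count_space UNIV" and B=B and B'=1])
       (use f'_bounded measurable_measure_pmf[of q]
         in \<open>auto simp: measure_pmf.emeasure_space_1 intro!: measure_pmf.finite_measure\<close>)
  also have "\<dots> = (\<integral>x. (\<integral>y. f y \<partial>q x) \<partial>p)"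
    by (intro integral_cong_AE) (auto simp: f'_def AE_measure_pmf_iff intro!: integral_cong_AE)
  finally show ?thesis .
qed

lemma (in prob_space) integral_abs_le_sqrt_integral_square:
  fixes X :: "'a \<Rightarrow> real"
  assumes [measurable]: "X \<in> borel_measurable M" and square_integrable: "integrable M (\<lambda>x. (X x)\<^sup>2)"
  shows "(\<integral>x. \<bar>X x\<bar> \<partial>M) \<le> sqrt (\<integral>x. (X x)\<^sup>2 \<partial>M)"
proof (rule real_le_rsqrt)
  have "integrable M (\<lambda>x. \<bar>X x\<bar>)"
    by (rule square_integrable_imp_integrable) (use square_integrable in simp_all)
  then have "variance (\<lambda>x. \<bar>X x\<bar>) = (\<integral>x. (X x)\<^sup>2 \<partial>M) - (\<integral>x. \<bar>X x\<bar> \<partial>M)\<^sup>2"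
    using variance_eq[of "\<lambda>x. \<bar>X x\<bar>"] square_integrable by simp
  with variance_positive show "(\<integral>x. \<bar>X x\<bar> \<partial>M)\<^sup>2 \<le> (\<integral>x. (X x)\<^sup>2 \<partial>M)"
    by (metis diff_ge_0_iff_ge)
qed

lemma (in prob_space) integral_quadratic:
  fixes X :: "'a \<Rightarrow> real"
  assumes "integrable M X" "integrable M (\<lambda>x. (X x)\<^sup>2)"
  shows "(\<integral>x. (X x)\<^sup>2 + 2 * X x * a + b \<partial>M) = (\<integral>x. (X x)\<^sup>2 \<partial>M) + 2 * a * (\<integral>x. X x \<partial>M) + b"
proof -
  have "(\<integral>x. (X x)\<^sup>2 + 2 * X x * a + b \<partial>M) = (\<integral>x. (X x)\<^sup>2 + (2 * a) * X x \<partial>M) + b"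
    by (simp add: prob_space mult_ac integrable_diff assms)
  also have "(\<integral>x. (X x)\<^sup>2 + (2 * a) * X x \<partial>M) = (\<integral>x. (X x)\<^sup>2 \<partial>M) + 2 * a * (\<integral>x. X x \<partial>M)"
    using assms by simp
  finally show ?thesis .
qed

lemma affine_recurrence_bound:
  fixes c :: "nat \<Rightarrow> real"
  assumes c0: "c 0 = 0" and c_Suc: "\<And>n. c (Suc n) = \<rho> * c n + \<kappa>" and \<rho>: "-1 \<le> \<rho>" "\<rho> < 1"
  shows "\<bar>c n\<bar> \<le> 2 * \<bar>\<kappa>\<bar> / (1 - \<rho>)"
proof -
  define L where "L = \<kappa> / (1 - \<rho>)"
  have closed_form: "c n - L = \<rho> ^ n * (- L)" for n
  proof (induction n)
    case 0
    show ?case using c0 by simp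
  next
    case (Suc n)
    have "\<rho> * L + \<kappa> = L" unfolding L_def using \<rho> by (simp add: field_simps)
    then have "c (Suc n) - L = \<rho> * (c n - L)" using c_Suc[of n] by (simp add: algebra_simps)
    then show ?case using Suc by simp
  qed
  have "\<bar>\<rho> ^ n\<bar> \<le> 1" using \<rho> by (simp add: power_abs power_le_one)
  then have "\<bar>\<rho> ^ n * (- L)\<bar> \<le> \<bar>L\<bar>" by (simp add: abs_mult mult_left_le_one_le)
  then have "\<bar>c n\<bar> \<le> 2 * \<bar>L\<bar>" using closed_form[of n] by linarith
  moreover have "\<bar>L\<bar> = \<bar>\<kappa>\<bar> / (1 - \<rho>)" unfolding L_def using \<rho> by simp
  ultimately show ?thesis by simp
qed

fun sign_walk :: "'a pmf \<Rightarrow> ('a \<Rightarrow> real) \<Rightarrow> ('a \<Rightarrow> 'v::real_vector) \<Rightarrow> nat \<Rightarrow> 'v pmf" where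
  "sign_walk \<mu> \<sigma> f 0 = return_pmf 0"
| "sign_walk \<mu> \<sigma> f (Suc n) = bind_pmf (sign_walk \<mu> \<sigma> f n) (\<lambda>x. map_pmf (\<lambda>g. \<sigma> g *\<^sub>R x + f g) \<mu>)"

lemma map_pmf_sign_walk:
  assumes "linear L"
  shows "map_pmf L (sign_walk \<mu> \<sigma> f n) = sign_walk \<mu> \<sigma> (L \<circ> f) n"
proof (induction n)
  case 0
  show ?case using linear_0[OF assms] by simp
next
  case (Suc n)
  have "map_pmf L (sign_walk \<mu> \<sigma> f (Suc n))
      = bind_pmf (sign_walk \<mu> \<sigma> f n) (\<lambda>x. map_pmf (\<lambda>g. \<sigma> g *\<^sub>R L x + L (f g)) \<mu>)"
    by (simp add: map_bind_pmf pmf.map_comp o_def linear_add[OF assms] linear_scale[OF assms])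
  also have "\<dots> = sign_walk \<mu> \<sigma> (L \<circ> f) (Suc n)"
    by (simp add: Suc.IH[symmetric] bind_map_pmf)
  finally show ?case .
qed

lemma nn_integral_norm_sign_walk_le:
  assumes sign: "\<And>g. g \<in> set_pmf \<mu> \<Longrightarrow> \<bar>\<sigma> g\<bar> \<le> 1"
  shows "(\<integral>\<^sup>+x. norm x \<partial>sign_walk \<mu> \<sigma> f n) \<le> of_nat n * (\<integral>\<^sup>+g. norm (f g) \<partial>\<mu>)"
proof (induction n)
  case 0
  show ?case by simp
next
  case (Suc n)
  let ?F = "\<integral>\<^sup>+g. norm (f g) \<partial>\<mu>"
  have "(\<integral>\<^sup>+x. norm x \<partial>sign_walk \<mu> \<sigma> f (Suc n))
      = (\<integral>\<^sup>+x. \<integral>\<^sup>+g. norm (\<sigma> g *\<^sub>R x + f g) \<partial>\<mu> \<partial>sign_walk \<mu> \<sigma> f n)"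
    by simp
  also have "\<dots> \<le> (\<integral>\<^sup>+x. \<integral>\<^sup>+g. ennreal (norm x) + ennreal (norm (f g)) \<partial>\<mu> \<partial>sign_walk \<mu> \<sigma> f n)"
  proof -
    have "norm (\<sigma> g *\<^sub>R x + f g) \<le> norm x + norm (f g)" if "g \<in> set_pmf \<mu>" for g and x :: 'b
      using norm_triangle_ineq[of "\<sigma> g *\<^sub>R x" "f g"]
        mult_left_le_one_le[OF _ _ sign[OF that], of "norm x"]
      by simp
    then show ?thesis
      by (intro nn_integral_mono nn_integral_mono_AE)
         (auto simp: AE_measure_pmf_iff simp flip: ennreal_plus intro: ennreal_leI)
  qed
  also have "\<dots> = (\<integral>\<^sup>+x. norm x \<partial>sign_walk \<mu> \<sigma> f n) + ?F"
    by (simp add: nn_integral_add measure_pmf.emeasure_space_1)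
  also have "\<dots> \<le> of_nat (Suc n) * ?F"
    using add_right_mono[OF Suc.IH] by (simp add: distrib_right)
  finally show ?case .
qed

lemma norm_sign_walk_le:
  assumes sign: "\<And>g. g \<in> set_pmf \<mu> \<Longrightarrow> \<bar>\<sigma> g\<bar> \<le> 1"
    and bounded: "\<And>g. g \<in> set_pmf \<mu> \<Longrightarrow> norm (f g) \<le> M"
  shows "x \<in> set_pmf (sign_walk \<mu> \<sigma> f n) \<Longrightarrow> norm x \<le> n * M"
proof (induction n arbitrary: x)
  case 0
  then show ?case by simp
next
  case (Suc n)
  then obtain y g where y: "y \<in> set_pmf (sign_walk \<mu> \<sigma> f n)" and g: "g \<in> set_pmf \<mu>"
    and x: "x = \<sigma> g *\<^sub>R y + f g"
    by auto
  have "norm x \<le> \<bar>\<sigma> g\<bar> * norm y + norm (f g)"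
    unfolding x using norm_triangle_ineq[of "\<sigma> g *\<^sub>R y" "f g"] by simp
  also have "\<dots> \<le> norm y + M"
    using mult_left_le_one_le[OF _ _ sign[OF g], of "norm y"] bounded[OF g] by simp
  also have "\<dots> \<le> real (Suc n) * M"
    using Suc.IH[OF y] by (simp add: algebra_simps)
  finally show ?case .
qed

context
  fixes \<mu> :: "'a pmf" and \<sigma> f :: "'a \<Rightarrow> real" and M :: real
  assumes sign: "\<And>g. g \<in> set_pmf \<mu> \<Longrightarrow> \<bar>\<sigma> g\<bar> = 1"
    and bounded: "\<And>g. g \<in> set_pmf \<mu> \<Longrightarrow> \<bar>f g\<bar> \<le> M"
begin

lemma abs_sign_walk_le: "x \<in> set_pmf (sign_walk \<mu> \<sigma> f n) \<Longrightarrow> \<bar>x\<bar> \<le> n * M"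
  using norm_sign_walk_le[of \<mu> \<sigma> f M] sign bounded by simp

lemma integrable_sign_walk_power: "integrable (sign_walk \<mu> \<sigma> f n) (\<lambda>x. x ^ k)"
  by (rule integrable_measure_pmf_bounded[where B="(real n * M) ^ k"])
     (unfold power_abs, intro power_mono abs_sign_walk_le, simp_all)

lemma integrable_increments:
  "integrable \<mu> \<sigma>" "integrable \<mu> f" "integrable \<mu> (\<lambda>g. \<sigma> g * f g)" "integrable \<mu> (\<lambda>g. (f g)\<^sup>2)"
proof -
  show "integrable \<mu> \<sigma>" by (rule integrable_measure_pmf_bounded[where B=1]) (use sign in simp)
  show "integrable \<mu> f" by (rule integrable_measure_pmf_bounded[where B=M]) (use bounded in simp)
  show "integrable \<mu> (\<lambda>g. \<sigma> g * f g)"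
    by (rule integrable_measure_pmf_bounded[where B=M]) (use sign bounded in \<open>simp add: abs_mult\<close>)
  show "integrable \<mu> (\<lambda>g. (f g)\<^sup>2)"
    by (rule integrable_measure_pmf_bounded[where B="M\<^sup>2"])
       (unfold power_abs, intro power_mono bounded, simp_all)
qed

lemma integral_sign_walk_Suc_iterated:
  fixes h :: "real \<Rightarrow> real"
  assumes "\<And>x. \<bar>x\<bar> \<le> real (Suc n) * M \<Longrightarrow> \<bar>h x\<bar> \<le> B"
  shows "(\<integral>x. h x \<partial>sign_walk \<mu> \<sigma> f (Suc n))
    = (\<integral>y. (\<integral>g. h (\<sigma> g * y + f g) \<partial>\<mu>) \<partial>sign_walk \<mu> \<sigma> f n)"
proof -
  have "\<bar>h x\<bar> \<le> B" if "x \<in> set_pmf (sign_walk \<mu> \<sigma> f (Suc n))" for x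
    using assms abs_sign_walk_le[OF that] by blast
  then show ?thesis
    using integral_bind_pmf_bounded[of "sign_walk \<mu> \<sigma> f n" "\<lambda>y. map_pmf (\<lambda>g. \<sigma> g * y + f g) \<mu>" h B]
    by simp
qed

lemma integral_sign_walk_Suc:
  "(\<integral>x. x \<partial>sign_walk \<mu> \<sigma> f (Suc n))
     = (\<integral>g. \<sigma> g \<partial>\<mu>) * (\<integral>x. x \<partial>sign_walk \<mu> \<sigma> f n) + (\<integral>g. f g \<partial>\<mu>)"
proof -
  have "(\<integral>x. x \<partial>sign_walk \<mu> \<sigma> f (Suc n))
      = (\<integral>y. (\<integral>g. \<sigma> g \<partial>\<mu>) * y + (\<integral>g. f g \<partial>\<mu>) \<partial>sign_walk \<mu> \<sigma> f n)"
    by (subst integral_sign_walk_Suc_iterated[where B="real (Suc n) * M"])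
       (simp_all add: integrable_increments mult.commute)
  also have "\<dots> = (\<integral>g. \<sigma> g \<partial>\<mu>) * (\<integral>x. x \<partial>sign_walk \<mu> \<sigma> f n) + (\<integral>g. f g \<partial>\<mu>)"
    using integrable_sign_walk_power[of n 1] by simp
  finally show ?thesis .
qed

lemma integral_square_sign_walk_Suc:
  "(\<integral>x. x\<^sup>2 \<partial>sign_walk \<mu> \<sigma> f (Suc n))
     = (\<integral>x. x\<^sup>2 \<partial>sign_walk \<mu> \<sigma> f n)
       + 2 * (\<integral>g. \<sigma> g * f g \<partial>\<mu>) * (\<integral>x. x \<partial>sign_walk \<mu> \<sigma> f n) + (\<integral>g. (f g)\<^sup>2 \<partial>\<mu>)"
proof -
  let ?\<kappa> = "\<integral>g. \<sigma> g * f g \<partial>\<mu>" and ?w = "\<integral>g. (f g)\<^sup>2 \<partial>\<mu>"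
  have square: "(\<sigma> g * y + f g)\<^sup>2 = y\<^sup>2 + 2 * y * (\<sigma> g * f g) + (f g)\<^sup>2" if "g \<in> set_pmf \<mu>" for g y
  proof -
    have "(\<sigma> g)\<^sup>2 = 1" using sign[OF that] by (metis power2_abs one_power2)
    then show ?thesis by (simp add: power2_eq_square algebra_simps)
  qed
  have "(\<integral>x. x\<^sup>2 \<partial>sign_walk \<mu> \<sigma> f (Suc n))
      = (\<integral>y. (\<integral>g. (\<sigma> g * y + f g)\<^sup>2 \<partial>\<mu>) \<partial>sign_walk \<mu> \<sigma> f n)"
    by (rule integral_sign_walk_Suc_iterated[where B="(real (Suc n) * M)\<^sup>2"])
       (simp add: abs_le_square_iff[symmetric])
  also have "\<dots> = (\<integral>y. y\<^sup>2 + 2 * y * ?\<kappa> + ?w \<partial>sign_walk \<mu> \<sigma> f n)"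
  proof (intro Bochner_Integration.integral_cong refl)
    fix y
    have "(\<integral>g. (\<sigma> g * y + f g)\<^sup>2 \<partial>\<mu>) = (\<integral>g. y\<^sup>2 + 2 * y * (\<sigma> g * f g) + (f g)\<^sup>2 \<partial>\<mu>)"
      by (intro integral_cong_AE) (auto simp: AE_measure_pmf_iff square)
    then show "(\<integral>g. (\<sigma> g * y + f g)\<^sup>2 \<partial>\<mu>) = y\<^sup>2 + 2 * y * ?\<kappa> + ?w"
      by (simp add: integrable_increments)
  qed
  also have "\<dots> = (\<integral>x. x\<^sup>2 \<partial>sign_walk \<mu> \<sigma> f n) + 2 * ?\<kappa> * (\<integral>x. x \<partial>sign_walk \<mu> \<sigma> f n) + ?w"
    using prob_space_measure_pmf integrable_sign_walk_power[of n 2]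
      integrable_sign_walk_power[of n 1]
    by (intro prob_space.integral_quadratic) simp_all
  finally show ?thesis .
qed

lemma bound_nonneg: "0 \<le> M"
proof -
  obtain g where "g \<in> set_pmf \<mu>" using set_pmf_not_empty[of \<mu>] by blast
  then show ?thesis using bounded abs_ge_zero order_trans by blast
qed

lemma abs_integral_sign_walk_le:
  assumes flip: "(\<integral>g. \<sigma> g \<partial>\<mu>) < 1"
  shows "\<bar>\<integral>x. x \<partial>sign_walk \<mu> \<sigma> f n\<bar> \<le> 2 * M / (1 - (\<integral>g. \<sigma> g \<partial>\<mu>))"
proof -
  have \<rho>: "-1 \<le> (\<integral>g. \<sigma> g \<partial>\<mu>)"
    using abs_integral_measure_pmf_le[of \<mu> \<sigma> 1] sign by simp
  have "\<bar>\<integral>x. x \<partial>sign_walk \<mu> \<sigma> f n\<bar> \<le> 2 * \<bar>\<integral>g. f g \<partial>\<mu>\<bar> / (1 - (\<integral>g. \<sigma> g \<partial>\<mu>))"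
    by (rule affine_recurrence_bound[OF _ _ \<rho> flip, where c="\<lambda>n. \<integral>x. x \<partial>sign_walk \<mu> \<sigma> f n"])
       (simp_all add: integral_sign_walk_Suc del: sign_walk.simps(2))
  also have "\<dots> \<le> 2 * M / (1 - (\<integral>g. \<sigma> g \<partial>\<mu>))"
    using abs_integral_measure_pmf_le[of \<mu> f M] bounded flip by (simp add: divide_right_mono)
  finally show ?thesis .
qed

lemma integral_square_sign_walk_le:
  assumes flip: "(\<integral>g. \<sigma> g \<partial>\<mu>) < 1"
  shows "(\<integral>x. x\<^sup>2 \<partial>sign_walk \<mu> \<sigma> f n) \<le> real n * (M\<^sup>2 * (1 + 4 / (1 - (\<integral>g. \<sigma> g \<partial>\<mu>))))"
proof -
  define \<rho> where "\<rho> = (\<integral>g. \<sigma> g \<partial>\<mu>)"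
  define K where "K = M\<^sup>2 * (1 + 4 / (1 - \<rho>))"
  have \<kappa>: "\<bar>\<integral>g. \<sigma> g * f g \<partial>\<mu>\<bar> \<le> M"
    by (rule abs_integral_measure_pmf_le) (use sign bounded in \<open>simp add: abs_mult\<close>)
  have w: "\<bar>\<integral>g. (f g)\<^sup>2 \<partial>\<mu>\<bar> \<le> M\<^sup>2"
    by (rule abs_integral_measure_pmf_le) (unfold power_abs, intro power_mono bounded, simp_all)
  have step: "(\<integral>x. x\<^sup>2 \<partial>sign_walk \<mu> \<sigma> f (Suc n)) \<le> (\<integral>x. x\<^sup>2 \<partial>sign_walk \<mu> \<sigma> f n) + K" for n
  proof -
    have "\<bar>(\<integral>g. \<sigma> g * f g \<partial>\<mu>) * (\<integral>x. x \<partial>sign_walk \<mu> \<sigma> f n)\<bar> \<le> M * (2 * M / (1 - \<rho>))"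
      unfolding abs_mult \<rho>_def using \<kappa> abs_integral_sign_walk_le[OF flip] bound_nonneg
      by (intro mult_mono) auto
    then have "2 * (\<integral>g. \<sigma> g * f g \<partial>\<mu>) * (\<integral>x. x \<partial>sign_walk \<mu> \<sigma> f n) \<le> 4 * M\<^sup>2 / (1 - \<rho>)"
      by (simp add: abs_le_iff power2_eq_square)
    moreover have "K = M\<^sup>2 + 4 * M\<^sup>2 / (1 - \<rho>)"
      unfolding K_def by (simp add: distrib_left)
    ultimately show ?thesis
      using integral_square_sign_walk_Suc[of n] w by (simp add: abs_le_iff)
  qed
  have "(\<integral>x. x\<^sup>2 \<partial>sign_walk \<mu> \<sigma> f n) \<le> real n * K"
  proof (induction n)
    case 0
    show ?case by simp
  next
    case (Suc n)
    with step[of n] show ?case by (simp add: algebra_simps)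
  qed
  then show ?thesis unfolding K_def \<rho>_def .
qed

lemma integral_abs_sign_walk_le:
  assumes flip: "(\<integral>g. \<sigma> g \<partial>\<mu>) < 1"
  shows "(\<integral>x. \<bar>x\<bar> \<partial>sign_walk \<mu> \<sigma> f n) \<le> sqrt (real n * (M\<^sup>2 * (1 + 4 / (1 - (\<integral>g. \<sigma> g \<partial>\<mu>)))))"
proof -
  have "(\<integral>x. \<bar>x\<bar> \<partial>sign_walk \<mu> \<sigma> f n) \<le> sqrt (\<integral>x. x\<^sup>2 \<partial>sign_walk \<mu> \<sigma> f n)"
    using integrable_sign_walk_power[of n 2]
    by (intro measure_pmf.integral_abs_le_sqrt_integral_square) simp_all
  also have "\<dots> \<le> sqrt (real n * (M\<^sup>2 * (1 + 4 / (1 - (\<integral>g. \<sigma> g \<partial>\<mu>)))))"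
    using integral_square_sign_walk_le[OF flip] by (rule real_sqrt_le_mono)
  finally show ?thesis .
qed

end

definition clip :: "real \<Rightarrow> real \<Rightarrow> real" where
  "clip M x = max (- M) (min M x)"

lemma abs_clip_le: "0 \<le> M \<Longrightarrow> \<bar>clip M x\<bar> \<le> M"
  unfolding clip_def by auto

lemma abs_diff_clip_le: "0 \<le> M \<Longrightarrow> \<bar>x - clip M x\<bar> \<le> \<bar>x\<bar>"
  unfolding clip_def by auto

lemma clip_eq: "\<bar>x\<bar> \<le> M \<Longrightarrow> clip M x = x"
  unfolding clip_def by auto

lemma integral_abs_sign_walk_le_clip:
  fixes f :: "'a \<Rightarrow> real"
  assumes sign: "\<And>g. g \<in> set_pmf \<mu> \<Longrightarrow> \<bar>\<sigma> g\<bar> = 1" and flip: "(\<integral>g. \<sigma> g \<partial>\<mu>) < 1"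
    and f: "integrable \<mu> f" and M: "0 \<le> M"
  shows "(\<integral>x. \<bar>x\<bar> \<partial>sign_walk \<mu> \<sigma> f n)
    \<le> sqrt (real n * (M\<^sup>2 * (1 + 4 / (1 - (\<integral>g. \<sigma> g \<partial>\<mu>)))))
       + real n * (\<integral>g. \<bar>f g - clip M (f g)\<bar> \<partial>\<mu>)"
proof -
  define u where "u g = clip M (f g)" for g
  define W where "W = sign_walk \<mu> \<sigma> (\<lambda>g. (f g, u g)) n"
  define S where "S = sqrt (real n * (M\<^sup>2 * (1 + 4 / (1 - (\<integral>g. \<sigma> g \<partial>\<mu>)))))"
  define V where "V = (\<integral>g. \<bar>f g - u g\<bar> \<partial>\<mu>)"
  \<comment> \<open>Coupling: the walks driven by \<open>f\<close>, by \<open>u\<close> and by \<open>f - u\<close> are linear images of \<open>W\<close>.\<close>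
  have fst_W: "map_pmf fst W = sign_walk \<mu> \<sigma> f n"
    unfolding W_def
    by (subst map_pmf_sign_walk) (auto intro: bounded_linear.linear bounded_linear_fst simp: o_def)
  have snd_W: "map_pmf snd W = sign_walk \<mu> \<sigma> u n"
    unfolding W_def
    by (subst map_pmf_sign_walk) (auto intro: bounded_linear.linear bounded_linear_snd simp: o_def)
  have diff_W: "map_pmf (\<lambda>p. fst p - snd p) W = sign_walk \<mu> \<sigma> (\<lambda>g. f g - u g) n"
    unfolding W_def
    by (subst map_pmf_sign_walk)
       (auto intro: bounded_linear.linear bounded_linear_sub bounded_linear_fst bounded_linear_snd
         simp: o_def)
  have S_nonneg: "0 \<le> S" unfolding S_def using flip by simp
  have V_nonneg: "0 \<le> V" unfolding V_def by simp
  have u_bounded: "\<bar>u g\<bar> \<le> M" for g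
    unfolding u_def using abs_clip_le[OF M] .
  have V_integrable: "integrable \<mu> (\<lambda>g. \<bar>f g - u g\<bar>)"
    by (rule Bochner_Integration.integrable_bound[OF f])
       (auto simp: u_def abs_diff_clip_le[OF M])
  have "(\<integral>\<^sup>+x. ennreal \<bar>x\<bar> \<partial>sign_walk \<mu> \<sigma> f n)
      \<le> (\<integral>\<^sup>+p. ennreal \<bar>snd p\<bar> + ennreal \<bar>fst p - snd p\<bar> \<partial>W)"
    unfolding fst_W[symmetric]
    by (auto intro!: nn_integral_mono simp flip: ennreal_plus intro: ennreal_leI)
  also have "\<dots> = (\<integral>\<^sup>+x. ennreal \<bar>x\<bar> \<partial>sign_walk \<mu> \<sigma> u n)
      + (\<integral>\<^sup>+x. ennreal (norm x) \<partial>sign_walk \<mu> \<sigma> (\<lambda>g. f g - u g) n)"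
    unfolding snd_W[symmetric] diff_W[symmetric] by (simp add: nn_integral_add)
  also have "(\<integral>\<^sup>+x. ennreal \<bar>x\<bar> \<partial>sign_walk \<mu> \<sigma> u n) = ennreal (\<integral>x. \<bar>x\<bar> \<partial>sign_walk \<mu> \<sigma> u n)"
    using integrable_sign_walk_power[of \<mu> \<sigma> u M n 1, OF sign u_bounded]
    by (intro nn_integral_eq_integral) auto
  also have "(\<integral>x. \<bar>x\<bar> \<partial>sign_walk \<mu> \<sigma> u n) \<le> S"
    unfolding S_def using integral_abs_sign_walk_le[of \<mu> \<sigma> u M, OF sign u_bounded flip] .
  also have "(\<integral>\<^sup>+x. ennreal (norm x) \<partial>sign_walk \<mu> \<sigma> (\<lambda>g. f g - u g) n)
      \<le> of_nat n * (\<integral>\<^sup>+g. ennreal \<bar>f g - u g\<bar> \<partial>\<mu>)"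
    using nn_integral_norm_sign_walk_le[of \<mu> \<sigma> "\<lambda>g. f g - u g" n] sign by simp
  also have "(\<integral>\<^sup>+g. ennreal \<bar>f g - u g\<bar> \<partial>\<mu>) = ennreal V"
    unfolding V_def using V_integrable by (intro nn_integral_eq_integral) auto
  finally have "(\<integral>\<^sup>+x. ennreal \<bar>x\<bar> \<partial>sign_walk \<mu> \<sigma> f n) \<le> ennreal S + of_nat n * ennreal V"
    by (auto intro: add_mono ennreal_leI)
  also have "\<dots> = ennreal (S + real n * V)"
    using S_nonneg V_nonneg by (simp add: ennreal_mult ennreal_of_nat_eq_real_of_nat)
  finally have "(\<integral>x. \<bar>x\<bar> \<partial>sign_walk \<mu> \<sigma> f n) \<le> S + real n * V"
    using S_nonneg V_nonneg by (intro integral_real_bounded) auto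
  then show ?thesis
    unfolding S_def V_def u_def .
qed

lemma integral_clip_error_tendsto_zero:
  fixes f :: "'a \<Rightarrow> real"
  assumes f: "integrable M f"
  shows "(\<lambda>i. \<integral>x. \<bar>f x - clip (real i) (f x)\<bar> \<partial>M) \<longlonglongrightarrow> 0"
proof -
  have "(\<lambda>i. \<integral>x. \<bar>f x - clip (real i) (f x)\<bar> \<partial>M) \<longlonglongrightarrow> (\<integral>x. 0 \<partial>M)"
  proof (rule integral_dominated_convergence[where w="\<lambda>x. \<bar>f x\<bar>"])
    show "AE x in M. (\<lambda>i. \<bar>f x - clip (real i) (f x)\<bar>) \<longlonglongrightarrow> 0"
    proof (intro AE_I2 tendsto_eventually eventually_sequentiallyI)
      fix x i assume "nat \<lceil>\<bar>f x\<bar>\<rceil> \<le> i"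
      then have "\<bar>f x\<bar> \<le> real i" by linarith
      then show "\<bar>f x - clip (real i) (f x)\<bar> = 0" by (simp add: clip_eq)
    qed
    show "AE x in M. norm \<bar>f x - clip (real i) (f x)\<bar> \<le> \<bar>f x\<bar>" for i
      by (simp add: abs_diff_clip_le)
  qed (use f in \<open>simp_all add: clip_def borel_measurable_integrable\<close>)
  then show ?thesis by simp
qed

lemma integral_sign_less_one:
  fixes \<sigma> :: "'a \<Rightarrow> real"
  assumes sign: "\<And>g. g \<in> set_pmf \<mu> \<Longrightarrow> \<bar>\<sigma> g\<bar> = 1" and flip: "g0 \<in> set_pmf \<mu>" "\<sigma> g0 = -1"
  shows "(\<integral>g. \<sigma> g \<partial>\<mu>) < 1"
proof -
  have "0 \<le> 1 - \<sigma> g" if "g \<in> set_pmf \<mu>" for g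
    using sign[OF that] by arith
  then have nonneg: "AE g in \<mu>. 0 \<le> 1 - \<sigma> g"
    by (simp add: AE_measure_pmf_iff)
  have integrable: "integrable \<mu> \<sigma>"
    using sign by (intro integrable_measure_pmf_bounded[where B=1]) simp
  have "(\<integral>g. 1 - \<sigma> g \<partial>\<mu>) \<noteq> 0"
  proof
    assume "(\<integral>g. 1 - \<sigma> g \<partial>\<mu>) = 0"
    then have "AE g in \<mu>. 1 - \<sigma> g = 0"
      using integral_nonneg_eq_0_iff_AE[OF _ nonneg] integrable by simp
    with flip show False by (simp add: AE_measure_pmf_iff)
  qed
  moreover have "0 \<le> (\<integral>g. 1 - \<sigma> g \<partial>\<mu>)"
    using nonneg by (rule integral_nonneg_AE)
  ultimately show ?thesis
    using integrable by (simp add: Bochner_Integration.integral_diff)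
qed

theorem sign_walk_abs_mean_tendsto_zero:
  fixes f :: "'a \<Rightarrow> real"
  assumes sign: "\<And>g. g \<in> set_pmf \<mu> \<Longrightarrow> \<bar>\<sigma> g\<bar> = 1" and flip: "g0 \<in> set_pmf \<mu>" "\<sigma> g0 = -1"
    and f: "integrable \<mu> f"
  shows "(\<lambda>n. (\<integral>x. \<bar>x\<bar> \<partial>sign_walk \<mu> \<sigma> f n) / real n) \<longlonglongrightarrow> 0"
proof (rule order_tendstoI)
  fix r :: real assume "0 < r"
  define \<rho> where "\<rho> = (\<integral>g. \<sigma> g \<partial>\<mu>)"
  have \<rho>: "\<rho> < 1" unfolding \<rho>_def using integral_sign_less_one[where \<mu>=\<mu> and \<sigma>=\<sigma>, OF sign flip] .
  obtain i where i: "(\<integral>g. \<bar>f g - clip (real i) (f g)\<bar> \<partial>\<mu>) < r / 2"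
    using order_tendstoD(2)[OF integral_clip_error_tendsto_zero[OF f], of "r / 2"] \<open>0 < r\<close>
    by (auto simp: eventually_sequentially)
  define K where "K = (real i)\<^sup>2 * (1 + 4 / (1 - \<rho>))"
  have "(\<lambda>n. sqrt (K / real n)) \<longlonglongrightarrow> 0"
    using tendsto_real_sqrt[OF lim_const_over_n[of K]] by simp
  then have "eventually (\<lambda>n. sqrt (K / real n) < r / 2) sequentially"
    using \<open>0 < r\<close> by (intro order_tendstoD(2)) auto
  moreover have "eventually (\<lambda>n. 0 < n) sequentially"
    by (rule eventually_gt_at_top)
  ultimately show "eventually (\<lambda>n. (\<integral>x. \<bar>x\<bar> \<partial>sign_walk \<mu> \<sigma> f n) / real n < r) sequentially"
  proof eventually_elim
    case (elim n)
    have "(\<integral>x. \<bar>x\<bar> \<partial>sign_walk \<mu> \<sigma> f n)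
        \<le> sqrt (real n * K) + real n * (\<integral>g. \<bar>f g - clip (real i) (f g)\<bar> \<partial>\<mu>)"
      using integral_abs_sign_walk_le_clip[where \<mu>=\<mu> and \<sigma>=\<sigma> and M="real i" and n=n,
          OF sign \<rho>[unfolded \<rho>_def] f]
      unfolding K_def \<rho>_def by simp
    also have "sqrt (real n * K) = real n * sqrt (K / real n)"
      using elim(2) by (simp add: real_sqrt_mult real_sqrt_divide field_simps real_div_sqrt)
    also have "\<dots> + real n * (\<integral>g. \<bar>f g - clip (real i) (f g)\<bar> \<partial>\<mu>)
        < real n * (r / 2) + real n * (r / 2)"
      using elim i by (intro add_strict_mono mult_strict_left_mono) auto
    finally show ?case
      using elim(2) by (simp add: divide_less_eq)
  qed
next
  fix r :: real assume "r < 0"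
  show "eventually (\<lambda>n. r < (\<integral>x. \<bar>x\<bar> \<partial>sign_walk \<mu> \<sigma> f n) / real n) sequentially"
    using \<open>r < 0\<close>
    by (intro always_eventually allI, rule less_le_trans[OF _ divide_nonneg_nonneg]) auto
qed

definition monomial_SL2 :: "'k::field mat2 set" where
  "monomial_SL2 = {(a, 0, 0, d) | a d. a * d = 1} \<union> {(0, b, c, 0) | b c. b * c = -1}"

fun mono_sign :: "'k::field mat2 \<Rightarrow> real" where
  "mono_sign (a, b, c, d) = (if b = 0 \<and> c = 0 then 1 else -1)"

fun mono_log :: "('k::field \<Rightarrow> real) \<Rightarrow> 'k mat2 \<Rightarrow> real" where
  "mono_log av (a, b, c, d) = (if b = 0 \<and> c = 0 then ln (av a) else ln (av c))"

lemma abs_mono_sign: "\<bar>mono_sign g\<bar> = 1"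
  by (cases g) auto

lemma mid_monomial_SL2: "mid \<in> monomial_SL2"
  unfolding monomial_SL2_def mid_def by auto

lemma mmul_monomial_SL2:
  assumes "g \<in> monomial_SL2" "h \<in> monomial_SL2"
  shows "mmul g h \<in> monomial_SL2"
  using assms[unfolded monomial_SL2_def]
proof (elim UnE CollectE exE conjE)
  fix a d a' d' assume "g = (a, 0, 0, d)" "a * d = 1" "h = (a', 0, 0, d')" "a' * d' = 1"
  moreover have "(a * a') * (d * d') = (a * d) * (a' * d')" by (simp add: ac_simps)
  ultimately show ?thesis unfolding monomial_SL2_def by auto
next
  fix a d b c assume "g = (a, 0, 0, d)" "a * d = 1" "h = (0, b, c, 0)" "b * c = -1"
  moreover have "(a * b) * (d * c) = (a * d) * (b * c)" by (simp add: ac_simps)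
  ultimately show ?thesis unfolding monomial_SL2_def by auto
next
  fix a d b c assume "h = (a, 0, 0, d)" "a * d = 1" "g = (0, b, c, 0)" "b * c = -1"
  moreover have "(b * d) * (c * a) = (a * d) * (b * c)" by (simp add: ac_simps)
  ultimately show ?thesis unfolding monomial_SL2_def by auto
next
  fix b c b' c' assume "g = (0, b, c, 0)" "b * c = -1" "h = (0, b', c', 0)" "b' * c' = -1"
  moreover have "(b * c') * (c * b') = (b * c) * (b' * c')" by (simp add: ac_simps)
  ultimately show ?thesis unfolding monomial_SL2_def by auto
qed

lemma set_pmf_convpow_monomial_SL2:
  assumes "set_pmf \<mu> \<subseteq> monomial_SL2"
  shows "set_pmf (convpow \<mu> n) \<subseteq> monomial_SL2"
proof (induction n)
  case 0
  show ?case by (simp add: mid_monomial_SL2)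
next
  case (Suc n)
  have "set_pmf (convpow \<mu> (Suc n)) = (\<Union>g\<in>set_pmf (convpow \<mu> n). mmul g ` set_pmf \<mu>)"
    by (simp add: conv_def)
  with Suc.IH assms show ?case
    by (auto intro!: mmul_monomial_SL2 simp del: mmul.simps)
qed

lemma monomial_SL2_if_stabilizes_zero_infty:
  assumes "g \<in> SL2" "mobius g ` {Fin 0, Infty} = {Fin 0, Infty}"
  shows "g \<in> monomial_SL2"
proof -
  obtain a b c d where g: "g = (a, b, c, d)" by (cases g) auto
  have det: "a * d - b * c = 1" using assms(1) g by (simp add: SL2_def)
  have images: "{mobius g (Fin 0), mobius g Infty} = {Fin 0, Infty}" using assms(2) by simp
  show ?thesis
  proof (cases "d = 0")
    case True
    then have "mobius g Infty = Fin 0"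
      using images g by (auto simp: doubleton_eq_iff)
    then have "a = 0" using g by (auto split: if_splits)
    with True det have "b * c = -1" by (simp add: equation_minus_iff)
    with True \<open>a = 0\<close> show ?thesis unfolding monomial_SL2_def g by auto
  next
    case False
    then have "mobius g (Fin 0) = Fin 0" "mobius g Infty = Infty"
      using images g by (auto simp: doubleton_eq_iff)
    then have "b = 0" "c = 0" using False g by (auto split: if_splits)
    with det show ?thesis unfolding monomial_SL2_def g by auto
  qed
qed

lemma mono_sign_if_swaps_zero:
  assumes "g \<in> monomial_SL2" "mobius g (Fin 0) = Infty"
  shows "mono_sign g = -1"
  using assms unfolding monomial_SL2_def by (auto split: if_splits)

context
  fixes av :: "'k::field \<Rightarrow> real"
  assumes av: "absolute_value av"
begin

lemma av_nonneg: "0 \<le> av x"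
  and av_eq_0_iff: "av x = 0 \<longleftrightarrow> x = 0"
  and av_mult: "av (x * y) = av x * av y"
  using av unfolding absolute_value_def by auto

lemma av_zero: "av 0 = 0"
  using av_eq_0_iff by simp

lemma av_pos: "x \<noteq> 0 \<Longrightarrow> 0 < av x"
  using av_nonneg[of x] av_eq_0_iff[of x] by linarith

lemma av_one: "av 1 = 1"
  using av_mult[of 1 1] av_pos[of 1] by simp

lemma av_minus: "av (- x) = av x"
proof -
  have "av (-1) * av (-1) = 1"
    using av_mult[of "-1" "-1"] av_one by simp
  then have "av (-1) = 1"
    using av_nonneg[of "-1"] abs_square_eq_1[of "av (-1)"] by (simp add: power2_eq_square)
  then show ?thesis
    using av_mult[of "-1" x] by simp
qed

lemma ln_av_mult: "x \<noteq> 0 \<Longrightarrow> y \<noteq> 0 \<Longrightarrow> ln (av (x * y)) = ln (av x) + ln (av y)"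
  using av_pos[of x] av_pos[of y] by (simp add: av_mult ln_mult)

lemma ln_av_eq_minus:
  assumes "x * y = 1 \<or> x * y = -1"
  shows "ln (av x) = - ln (av y)"
proof -
  have "x \<noteq> 0" "y \<noteq> 0" using assms by auto
  moreover have "av (x * y) = 1" using assms av_one av_minus by auto
  ultimately show ?thesis using ln_av_mult[of x y] by simp
qed

lemma vnorm_pos: "v \<noteq> (0, 0) \<Longrightarrow> 0 < vnorm av v"
  by (cases v) (auto simp: less_max_iff_disj av_pos)

lemma opnorm_eqI:
  assumes bound: "\<And>v. vnorm av (mapply g v) \<le> m * vnorm av v"
    and attained: "v0 \<noteq> (0, 0)" "vnorm av (mapply g v0) = m * vnorm av v0"
  shows "opnorm av g = m"
  unfolding opnorm_def
proof (rule cSup_eq_maximum)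
  show "m \<in> (\<lambda>v. vnorm av (mapply g v) / vnorm av v) ` {v. v \<noteq> (0, 0)}"
    using attained vnorm_pos[OF attained(1)] by (intro image_eqI[of _ _ v0]) auto
  fix r assume "r \<in> (\<lambda>v. vnorm av (mapply g v) / vnorm av v) ` {v. v \<noteq> (0, 0)}"
  then obtain v where "v \<noteq> (0, 0)" "r = vnorm av (mapply g v) / vnorm av v" by blast
  then show "r \<le> m" using bound[of v] vnorm_pos[of v] by (simp add: divide_le_eq)
qed

lemma opnorm_diag: "opnorm av (a, 0, 0, d) = max (av a) (av d)"
proof (rule opnorm_eqI)
  show "vnorm av (mapply (a, 0, 0, d) v) \<le> max (av a) (av d) * vnorm av v" for v
    by (cases v) (auto intro!: mult_mono simp: av_mult av_nonneg le_max_iff_disj)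
  let ?v0 = "if av d \<le> av a then (1, 0) else (0, 1) :: 'k \<times> 'k"
  show "?v0 \<noteq> (0, 0)" by simp
  show "vnorm av (mapply (a, 0, 0, d) ?v0) = max (av a) (av d) * vnorm av ?v0"
    using av_nonneg[of a] av_nonneg[of d] by (simp add: av_one av_zero max_def)
qed

lemma opnorm_antidiag: "opnorm av (0, b, c, 0) = max (av c) (av b)"
proof -
  have "vnorm av (mapply (0, b, c, 0) v) = vnorm av (mapply (c, 0, 0, b) v)" for v
    by (cases v) (simp add: max.commute)
  then show ?thesis
    unfolding opnorm_def opnorm_diag[symmetric] by simp
qed

lemma ln_max_av_inverse:
  assumes "x * y = 1 \<or> x * y = -1"
  shows "ln (max (av x) (av y)) = \<bar>ln (av x)\<bar>"
proof -
  have "x \<noteq> 0" "y \<noteq> 0" using assms by auto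
  then have "ln (max (av x) (av y)) = max (ln (av x)) (ln (av y))"
    using av_pos[of x] av_pos[of y] by (simp add: max_def)
  then show ?thesis
    using ln_av_eq_minus[OF assms] by simp
qed

lemma ln_opnorm_monomial_SL2:
  assumes "g \<in> monomial_SL2"
  shows "ln (opnorm av g) = \<bar>mono_log av g\<bar>"
  using assms unfolding monomial_SL2_def
proof (elim UnE CollectE exE conjE)
  fix a d assume "g = (a, 0, 0, d)" "a * d = 1"
  then show ?thesis using ln_max_av_inverse[of a d] by (simp add: opnorm_diag)
next
  fix b c assume "g = (0, b, c, 0)" "b * c = -1"
  then show ?thesis using ln_max_av_inverse[of c b] by (auto simp: opnorm_antidiag mult.commute)
qed

lemma mono_log_mmul:
  assumes "g \<in> monomial_SL2" "h \<in> monomial_SL2"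
  shows "mono_log av (mmul g h) = mono_sign h * mono_log av g + mono_log av h"
  using assms unfolding monomial_SL2_def
proof (elim UnE CollectE exE conjE)
  fix a d a' d' assume "g = (a, 0, 0, d)" "a * d = 1" "h = (a', 0, 0, d')" "a' * d' = 1"
  moreover from this have "a \<noteq> 0" "a' \<noteq> 0" by auto
  ultimately show ?thesis using ln_av_mult[of a a'] by auto
next
  fix a d b c assume "g = (a, 0, 0, d)" "a * d = 1" "h = (0, b, c, 0)" "b * c = -1"
  moreover from this have "a \<noteq> 0" "b \<noteq> 0" "c \<noteq> 0" "d \<noteq> 0" by auto
  ultimately show ?thesis
    using ln_av_mult[of d c] ln_av_eq_minus[of d a] by (auto simp: mult.commute)
next
  fix a d b c assume "h = (a, 0, 0, d)" "a * d = 1" "g = (0, b, c, 0)" "b * c = -1"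
  moreover from this have "a \<noteq> 0" "b \<noteq> 0" "c \<noteq> 0" "d \<noteq> 0" by auto
  ultimately show ?thesis using ln_av_mult[of c a] by auto
next
  fix b c b' c' assume "g = (0, b, c, 0)" "b * c = -1" "h = (0, b', c', 0)" "b' * c' = -1"
  moreover from this have "b \<noteq> 0" "c \<noteq> 0" "b' \<noteq> 0" "c' \<noteq> 0" by auto
  ultimately show ?thesis using ln_av_mult[of b c'] ln_av_eq_minus[of b c] by auto
qed

lemma map_pmf_mono_log_convpow:
  assumes \<mu>: "set_pmf \<mu> \<subseteq> monomial_SL2"
  shows "map_pmf (mono_log av) (convpow \<mu> n) = sign_walk \<mu> mono_sign (mono_log av) n"
proof (induction n)
  case 0
  show ?case by (simp add: mid_def av_one)
next
  case (Suc n)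
  have "map_pmf (mono_log av) (convpow \<mu> (Suc n))
      = bind_pmf (convpow \<mu> n) (\<lambda>\<gamma>. map_pmf (\<lambda>g. mono_log av (mmul \<gamma> g)) \<mu>)"
    by (simp add: conv_def map_bind_pmf pmf.map_comp o_def)
  also have "\<dots> = bind_pmf (convpow \<mu> n)
      (\<lambda>\<gamma>. map_pmf (\<lambda>g. mono_sign g *\<^sub>R mono_log av \<gamma> + mono_log av g) \<mu>)"
  proof (intro bind_pmf_cong refl map_pmf_cong)
    fix \<gamma> g assume "\<gamma> \<in> set_pmf (convpow \<mu> n)" "g \<in> set_pmf \<mu>"
    then have "\<gamma> \<in> monomial_SL2" "g \<in> monomial_SL2"
      using \<mu> set_pmf_convpow_monomial_SL2[OF \<mu>] by blast+
    then show "mono_log av (mmul \<gamma> g) = mono_sign g *\<^sub>R mono_log av \<gamma> + mono_log av g"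
      by (simp add: mono_log_mmul del: mmul.simps mono_log.simps)
  qed
  also have "\<dots> = sign_walk \<mu> mono_sign (mono_log av) (Suc n)"
    by (simp add: Suc.IH[symmetric] bind_map_pmf)
  finally show ?case .
qed

end

theorem proposition5p3:
  fixes av :: "'k::field \<Rightarrow> real" and \<mu> :: "'k mat2 pmf"
  assumes "complete_valued_field av"
    and "set_pmf \<mu> \<subseteq> SL2"
    and "integrable (measure_pmf \<mu>) (\<lambda>\<gamma>. ln (opnorm av \<gamma>))"
    and "\<forall>g \<in> set_pmf \<mu>. mobius g ` {Fin 0, Infty} = {Fin 0, Infty}"
    and "\<exists>g \<in> set_pmf \<mu>. mobius g (Fin 0) = Infty \<and> mobius g Infty = Fin 0"
  shows "(\<lambda>n. (\<integral>\<gamma>. ln (opnorm av \<gamma>) \<partial>measure_pmf (convpow \<mu> n)) / real n)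
           \<longlonglongrightarrow> 0"
proof -
  have av: "absolute_value av"
    using assms(1) unfolding complete_valued_field_def by simp
  have \<mu>: "set_pmf \<mu> \<subseteq> monomial_SL2"
    using assms(2,4) monomial_SL2_if_stabilizes_zero_infty by blast
  obtain g0 where g0: "g0 \<in> set_pmf \<mu>" "mono_sign g0 = -1"
    using assms(5) \<mu> mono_sign_if_swaps_zero by blast
  have ln_opnorm: "AE \<gamma> in p. ln (opnorm av \<gamma>) = \<bar>mono_log av \<gamma>\<bar>"
    if "set_pmf p \<subseteq> monomial_SL2" for p
    using that ln_opnorm_monomial_SL2[OF av] unfolding AE_measure_pmf_iff by blast
  have "integrable \<mu> (\<lambda>\<gamma>. \<bar>mono_log av \<gamma>\<bar>)"
    using assms(3) integrable_cong_AE[OF _ _ ln_opnorm[OF \<mu>]] by simp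
  then have integrable: "integrable \<mu> (mono_log av)"
    by (simp add: integrable_abs_iff)
  have "(\<integral>\<gamma>. ln (opnorm av \<gamma>) \<partial>convpow \<mu> n)
      = (\<integral>x. \<bar>x\<bar> \<partial>sign_walk \<mu> mono_sign (mono_log av) n)" for n
  proof -
    have "(\<integral>\<gamma>. ln (opnorm av \<gamma>) \<partial>convpow \<mu> n) = (\<integral>\<gamma>. \<bar>mono_log av \<gamma>\<bar> \<partial>convpow \<mu> n)"
      using ln_opnorm[OF set_pmf_convpow_monomial_SL2[OF \<mu>]] by (intro integral_cong_AE) simp_all
    then show ?thesis
      by (simp flip: map_pmf_mono_log_convpow[OF av \<mu>])
  qed
  then show ?thesis
    using sign_walk_abs_mean_tendsto_zero[where \<sigma>=mono_sign, OF abs_mono_sign g0 integrable] by simp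
qed

end
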